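(* Let $G=(V,E)$ be a connected graph with $V=\{1,\ldots,n\}$, $\mathbf{w}\colon E\to\{1,\ldots,N\}$, and let $\mathcal{T}$ be an elimination tree of $G$. Let $v$ be an internal node of $\mathcal{T}$ with children $u_1,\ldots,u_o$, and let $J'\subseteq \mathtt{tail}^+[v]$. Then $$Q_{[v]}(J')=\prod_{i\in[o]}P_{(u_i)}(J').$$
   Context: An elimination tree of $G=(V,E)$ is a rooted tree on vertex set $V$ such that for every edge $\{u,v\}\in E$ one of $u,v$ is an ancestor of the other. For a node $v$: $\mathtt{tree}[v]$ is the set of nodes of the subtree rooted at $v$ (including $v$), $\mathtt{tree}(v)=\mathtt{tree}[v]\setminus\{v\}$; $\mathtt{tail}[v]$ is the set of ancestors of $v$ including $v$, $\mathtt{tail}(v)=\mathtt{tail}[v]\setminus\{v\}$. For $W\subseteq V$ let $W^+=\{u,u+n\mid u\in W\}\subseteq[2n]$, and write $\mathtt{tree}^+[v]=(\mathtt{tree}[v])^+$ etc. For $U\subseteq V$, $\delta[U]=\{e\in E\mid e\cap U\neq\emptyset\}$. For $\mathbf{w}$ and $F\subseteq E$, $\mathbf{w}(F)=\sum_{e\in F}\mathbf{w}(e)$. Define $\mathtt{tpl}(W)=\{(E_1,E_2,L)\mid E_1,E_2\subseteq\delta[W],\ L\subseteq W,\ E_1\cap E_2=\emptyset\}$; $\mathtt{mon}(E_1,E_2,L)=x^{|E_1|}y^{|E_2|}z^{|L|}\omega^{\mathbf{w}(E_1\cup E_2)}\in\mathbb{Z}[x,y,z,\omega]$; for $I\subseteq[2n]$,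 $\mathtt{dsj}(I)$ is the set of triples $(E_1,E_2,L)$ such that $\{s,t\}\cap I=\emptyset$ for all $\{s,t\}\in E_1$, $\{s+n,t+n\}\cap I=\emptyset$ for all $\{s,t\}\in E_2$, and $L^+\cap I=\emptyset$. Iverson bracket $[p]$ is $1$ if $p$ holds and $0$ otherwise. For a node $v$ and $J\subseteq\mathtt{tail}^+(v)$, $$P_{(v)}(J)=\sum_{(E_1,E_2,L)\in\mathtt{tpl}(\mathtt{tree}[v])}\mathtt{mon}(E_1,E_2,L)\sum_{K\subseteq\mathtt{tree}^+[v]}(-1)^{|K|}\,[(E_1,E_2,L)\in\mathtt{dsj}(J\cup K)],$$ and for $J'\subseteq\mathtt{tail}^+[v]$, $$Q_{[v]}(J')=\sum_{(E_1,E_2,L)\in\mathtt{tpl}(\mathtt{tree}(v))}\mathtt{mon}(E_1,E_2,L)\sum_{K'\subseteq\mathtt{tree}^+(v)}(-1)^{|K'|}\,[(E_1,E_2,L)\in\mathtt{dsj}(J'\cup K')].$$ *)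

theory Defs
  imports Main
begin

definition simple_graph :: "nat \<Rightarrow> nat set set \<Rightarrow> bool" where
  "simple_graph n E \<longleftrightarrow> (\<forall>e\<in>E. e \<subseteq> {1..n} \<and> card e = 2)"

definition graph_connected :: "nat \<Rightarrow> nat set set \<Rightarrow> bool" where
  "graph_connected n E \<longleftrightarrow>
     (\<forall>u\<in>{1..n}. \<forall>v\<in>{1..n}. (u, v) \<in> {(a, b). {a, b} \<in> E}\<^sup>*)"

definition rooted_tree :: "nat set \<Rightarrow> (nat \<Rightarrow> nat) \<Rightarrow> nat \<Rightarrow> bool" where
  "rooted_tree V par r \<longleftrightarrow> r \<in> V \<and> par r = r \<and>
     (\<forall>v\<in>V - {r}. par v \<in> V \<and> par v \<noteq> v) \<and>
     (\<forall>v\<in>V. \<exists>k. (par ^^ k) v = r)"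

definition tailC :: "(nat \<Rightarrow> nat) \<Rightarrow> nat \<Rightarrow> nat set" where
  "tailC par v = {u. \<exists>k. (par ^^ k) v = u}"

definition treeC :: "nat set \<Rightarrow> (nat \<Rightarrow> nat) \<Rightarrow> nat \<Rightarrow> nat set" where
  "treeC V par v = {u\<in>V. v \<in> tailC par u}"

definition children :: "nat set \<Rightarrow> (nat \<Rightarrow> nat) \<Rightarrow> nat \<Rightarrow> nat set" where
  "children V par v = {u\<in>V. u \<noteq> v \<and> par u = v}"

definition elimination_tree :: "nat \<Rightarrow> nat set set \<Rightarrow> (nat \<Rightarrow> nat) \<Rightarrow> nat \<Rightarrow> bool" where
  "elimination_tree n E par r \<longleftrightarrow> rooted_tree {1..n} par r \<and>
     (\<forall>a b. {a, b} \<in> E \<longrightarrow> a \<in> tailC par b \<or> b \<in> tailC par a)"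

definition plusS :: "nat \<Rightarrow> nat set \<Rightarrow> nat set" where
  "plusS n W = W \<union> (\<lambda>u. u + n) ` W"

definition delta :: "nat set set \<Rightarrow> nat set \<Rightarrow> nat set set" where
  "delta E U = {e\<in>E. e \<inter> U \<noteq> {}}"

definition tpl :: "nat set set \<Rightarrow> nat set \<Rightarrow> (nat set set \<times> nat set set \<times> nat set) set" where
  "tpl E W = {(E1, E2, L). E1 \<subseteq> delta E W \<and> E2 \<subseteq> delta E W \<and> L \<subseteq> W \<and> E1 \<inter> E2 = {}}"

definition mon :: "(nat set \<Rightarrow> nat) \<Rightarrow> 'a::comm_ring_1 \<Rightarrow> 'a \<Rightarrow> 'a \<Rightarrow> 'a
                   \<Rightarrow> nat set set \<times> nat set set \<times> nat set \<Rightarrow> 'a" where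
  "mon w x y z om t = (case t of (E1, E2, L) \<Rightarrow>
     x ^ card E1 * y ^ card E2 * z ^ card L * om ^ (\<Sum>e\<in>E1 \<union> E2. w e))"

definition dsj :: "nat \<Rightarrow> nat set \<Rightarrow> nat set set \<times> nat set set \<times> nat set \<Rightarrow> bool" where
  "dsj n I t = (case t of (E1, E2, L) \<Rightarrow>
     (\<forall>e\<in>E1. e \<inter> I = {}) \<and> (\<forall>e\<in>E2. (\<lambda>s. s + n) ` e \<inter> I = {}) \<and> plusS n L \<inter> I = {})"

definition Pv :: "nat \<Rightarrow> nat set set \<Rightarrow> (nat set \<Rightarrow> nat) \<Rightarrow> (nat \<Rightarrow> nat)
                  \<Rightarrow> 'a::comm_ring_1 \<Rightarrow> 'a \<Rightarrow> 'a \<Rightarrow> 'a \<Rightarrow> nat \<Rightarrow> nat set \<Rightarrow> 'a" where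
  "Pv n E w par x y z om v J =
     (\<Sum>t\<in>tpl E (treeC {1..n} par v). mon w x y z om t *
        (\<Sum>K\<in>Pow (plusS n (treeC {1..n} par v)). (-1) ^ card K * of_bool (dsj n (J \<union> K) t)))"

definition Qv :: "nat \<Rightarrow> nat set set \<Rightarrow> (nat set \<Rightarrow> nat) \<Rightarrow> (nat \<Rightarrow> nat)
                  \<Rightarrow> 'a::comm_ring_1 \<Rightarrow> 'a \<Rightarrow> 'a \<Rightarrow> 'a \<Rightarrow> nat \<Rightarrow> nat set \<Rightarrow> 'a" where
  "Qv n E w par x y z om v J' =
     (\<Sum>t\<in>tpl E (treeC {1..n} par v - {v}). mon w x y z om t *
        (\<Sum>K'\<in>Pow (plusS n (treeC {1..n} par v - {v})). (-1) ^ card K' * of_bool (dsj n (J' \<union> K') t)))"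

end

theory Submission
  imports Defs
begin

(*
  For a vertex set U, call the set of positions in [2n] used by a triple t = (E1, E2, L)
  (the endpoints of E1, the shifted endpoints of E2, and L^+) the positions occupied by t.
  By inclusion-exclusion the inner alternating sum over K \<subseteq> U^+ is 1 if t avoids J and
  occupies all of U^+, and 0 otherwise.  If no edge meets both U and W, a triple over U \<union> W
  splits uniquely into a triple over U and one over W; the monomial is multiplicative and,
  since a triple over U occupies nothing in W^+, the covering condition splits as well.
  Hence the polynomial of U \<union> W is the product of those of U and W.  In an elimination
  tree tree(v) is the disjoint union of the subtrees of the children of v, and no edge
  joins two of them because every edge joins an ancestor to a descendant.
*)

lemma funpow_fixpoint: "f x = x \<Longrightarrow> (f ^^ k) x = x"
  by (induction k) auto

lemma funpow_add_apply: "(f ^^ (m + n)) x = (f ^^ m) ((f ^^ n) x)"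
  by (simp add: funpow_add)

lemma rooted_tree_par_closed: "rooted_tree V par r \<Longrightarrow> u \<in> V \<Longrightarrow> par u \<in> V"
  unfolding rooted_tree_def by (cases "u = r") auto

lemma rooted_tree_funpow_closed: "rooted_tree V par r \<Longrightarrow> u \<in> V \<Longrightarrow> (par ^^ k) u \<in> V"
  by (induction k) (auto intro: rooted_tree_par_closed)

lemma rooted_tree_cycle_imp_root:
  assumes rt: "rooted_tree V par r" and "u \<in> V" and "0 < m" and cyc: "(par ^^ m) u = u"
  shows "u = r"
proof -
  obtain k where k: "(par ^^ k) u = r"
    using rt \<open>u \<in> V\<close> unfolding rooted_tree_def by blast
  have "par r = r"
    using rt unfolding rooted_tree_def by blast
  have "u = ((par ^^ m) ^^ k) u"
    using cyc by (simp add: funpow_fixpoint)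
  also have "\<dots> = (par ^^ (m * k - k + k)) u"
    using \<open>0 < m\<close> by (simp add: funpow_mult)
  also have "\<dots> = (par ^^ (m * k - k)) ((par ^^ k) u)"
    by (rule funpow_add_apply)
  also have "\<dots> = r"
    using k \<open>par r = r\<close> by (simp add: funpow_fixpoint)
  finally show ?thesis .
qed

lemma tailC_refl: "u \<in> tailC par u"
  unfolding tailC_def by (auto intro: exI[of _ 0])

lemma tailC_trans:
  assumes "a \<in> tailC par b" "b \<in> tailC par c"
  shows "a \<in> tailC par c"
proof -
  obtain i j where "(par ^^ i) b = a" "(par ^^ j) c = b"
    using assms unfolding tailC_def by blast
  then have "(par ^^ (i + j)) c = a"
    by (simp add: funpow_add_apply)
  then show ?thesis
    unfolding tailC_def by blast
qed

lemma tailC_chain: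
  assumes "a \<in> tailC par u" "b \<in> tailC par u"
  shows "a \<in> tailC par b \<or> b \<in> tailC par a"
proof -
  obtain i j where i: "(par ^^ i) u = a" and j: "(par ^^ j) u = b"
    using assms unfolding tailC_def by blast
  have "(par ^^ (j - i)) a = b" if "i \<le> j"
    using i j that funpow_add_apply[where f=par and m="j - i" and n=i and x=u] by simp
  moreover have "(par ^^ (i - j)) b = a" if "j \<le> i"
    using i j that funpow_add_apply[where f=par and m="i - j" and n=j and x=u] by simp
  ultimately show ?thesis
    unfolding tailC_def by (cases "i \<le> j") auto
qed

lemma tailC_par_if_ne: "a \<in> tailC par b \<Longrightarrow> a \<noteq> b \<Longrightarrow> a \<in> tailC par (par b)"
proof -
  assume "a \<in> tailC par b" "a \<noteq> b"
  then obtain k where k: "(par ^^ k) b = a" "k \<noteq> 0"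
    unfolding tailC_def by fastforce
  then obtain j where "k = Suc j"
    using not0_implies_Suc by blast
  with k have "(par ^^ j) (par b) = a"
    by (simp add: funpow_swap1)
  then show ?thesis
    unfolding tailC_def by blast
qed

lemma child_notin_tailC_parent:
  assumes rt: "rooted_tree V par r" and c: "c \<in> children V par v"
  shows "c \<notin> tailC par v"
proof
  assume "c \<in> tailC par v"
  then obtain k where k: "(par ^^ k) v = c"
    unfolding tailC_def by blast
  have pc: "par c = v" "c \<in> V" "c \<noteq> v"
    using c unfolding children_def by auto
  then have "v \<in> V"
    using rooted_tree_par_closed[OF rt] by blast
  moreover have "(par ^^ Suc k) v = v"
    using k pc by simp
  ultimately have "v = r"
    using rooted_tree_cycle_imp_root[OF rt] by blast
  with k have "c = v"
    using rt funpow_fixpoint[of par r k] unfolding rooted_tree_def by simp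
  with pc show False by simp
qed

lemma children_tailC_unique:
  assumes rt: "rooted_tree V par r"
    and c: "c \<in> children V par v" "c' \<in> children V par v"
    and anc: "c \<in> tailC par u" "c' \<in> tailC par u"
  shows "c = c'"
proof -
  have "c \<notin> tailC par c'" "c' \<notin> tailC par c" if "c \<noteq> c'"
    using that c tailC_par_if_ne[of _ par] child_notin_tailC_parent[OF rt]
    unfolding children_def by fastforce+
  then show ?thesis
    using tailC_chain[OF anc] by blast
qed

lemma treeC_minus_root_eq_UN_children:
  assumes rt: "rooted_tree V par r"
  shows "treeC V par v - {v} = (\<Union>c\<in>children V par v. treeC V par c)"
proof (intro equalityI subsetI)
  fix u assume "u \<in> treeC V par v - {v}"
  then have u: "u \<in> V" "u \<noteq> v" "\<exists>k. (par ^^ k) u = v"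
    unfolding treeC_def tailC_def by auto
  then obtain k where k: "(par ^^ k) u = v" and least: "\<forall>j<k. (par ^^ j) u \<noteq> v"
    using exists_least_iff[of "\<lambda>k. (par ^^ k) u = v"] by blast
  then obtain j where "k = Suc j"
    using u(2) by (cases k) auto
  define c where "c = (par ^^ j) u"
  have "c \<in> children V par v"
    using k least \<open>k = Suc j\<close> rooted_tree_funpow_closed[OF rt u(1)]
    unfolding c_def children_def by auto
  moreover have "u \<in> treeC V par c"
    using u(1) unfolding treeC_def tailC_def c_def by blast
  ultimately show "u \<in> (\<Union>c\<in>children V par v. treeC V par c)"
    by blast
next
  fix u assume "u \<in> (\<Union>c\<in>children V par v. treeC V par c)"
  then obtain c where c: "c \<in> children V par v" and u: "u \<in> treeC V par c"
    by blast
  have "v \<in> tailC par c"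
    using c unfolding children_def tailC_def by (auto intro: exI[of _ 1])
  then have "v \<in> tailC par u"
    using u tailC_trans unfolding treeC_def by blast
  moreover have "u \<noteq> v"
    using u child_notin_tailC_parent[OF rt c] unfolding treeC_def by blast
  ultimately show "u \<in> treeC V par v - {v}"
    using u unfolding treeC_def by blast
qed

lemma subtrees_of_children_incomparable:
  assumes rt: "rooted_tree V par r"
    and c: "c \<in> children V par v" "c' \<in> children V par v" "c \<noteq> c'"
    and a: "a \<in> treeC V par c" and b: "b \<in> treeC V par c'"
  shows "a \<notin> tailC par b"
proof
  assume "a \<in> tailC par b"
  then have "c \<in> tailC par b"
    using a tailC_trans unfolding treeC_def by blast
  moreover have "c' \<in> tailC par b"
    using b unfolding treeC_def by blast
  ultimately show False
    using children_tailC_unique[OF rt c(1,2)] c(3) by blast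
qed

definition separated :: "nat set set \<Rightarrow> nat set \<Rightarrow> nat set \<Rightarrow> bool" where
  "separated E U W \<longleftrightarrow> U \<inter> W = {} \<and> (\<forall>e\<in>E. e \<inter> U = {} \<or> e \<inter> W = {})"

lemma separated_UN:
  assumes "\<forall>d\<in>C. separated E U (T d)"
  shows "separated E U (\<Union>d\<in>C. T d)"
  unfolding separated_def
proof (intro conjI ballI)
  show "U \<inter> (\<Union>d\<in>C. T d) = {}"
    using assms unfolding separated_def by blast
  fix e assume "e \<in> E"
  then show "e \<inter> U = {} \<or> e \<inter> (\<Union>d\<in>C. T d) = {}"
    using assms unfolding separated_def by blast
qed

lemma separated_delta_disjoint: "separated E U W \<Longrightarrow> delta E U \<inter> delta E W = {}"
  unfolding separated_def delta_def by blast

lemma elimination_tree_children_separated: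
  assumes et: "elimination_tree n E par r" and sg: "simple_graph n E"
    and c: "c \<in> children {1..n} par v" "c' \<in> children {1..n} par v" "c \<noteq> c'"
  shows "separated E (treeC {1..n} par c) (treeC {1..n} par c')"
proof -
  have rt: "rooted_tree {1..n} par r"
    using et unfolding elimination_tree_def by blast
  have incomparable: "a \<notin> tailC par b" "b \<notin> tailC par a"
    if "a \<in> treeC {1..n} par c" "b \<in> treeC {1..n} par c'" for a b
    using that subtrees_of_children_incomparable[OF rt] c by blast+
  have "e \<inter> treeC {1..n} par c = {} \<or> e \<inter> treeC {1..n} par c' = {}" if "e \<in> E" for e
  proof (rule ccontr)
    assume "\<not> ?thesis"
    then obtain a b where a: "a \<in> e" "a \<in> treeC {1..n} par c"
      and b: "b \<in> e" "b \<in> treeC {1..n} par c'"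
      by blast
    have "a \<noteq> b"
      using incomparable[OF a(2) b(2)] tailC_refl by metis
    moreover have "card e = 2"
      using sg \<open>e \<in> E\<close> unfolding simple_graph_def by blast
    ultimately have "e = {a, b}"
      using a(1) b(1) by (auto simp: card_2_iff)
    then have "a \<in> tailC par b \<or> b \<in> tailC par a"
      using et \<open>e \<in> E\<close> unfolding elimination_tree_def by blast
    with incomparable[OF a(2) b(2)] show False
      by blast
  qed
  moreover have "treeC {1..n} par c \<inter> treeC {1..n} par c' = {}"
    using incomparable tailC_refl by blast
  ultimately show ?thesis
    unfolding separated_def by blast
qed

lemma sum_Pow_minus_one_power:
  assumes "finite A"
  shows "(\<Sum>K\<in>Pow A. (-1) ^ card K :: 'a::comm_ring_1) = of_bool (A = {})"
proof -
  have "(\<Sum>K\<in>Pow A. (-1) ^ card K :: 'a) = (\<Prod>a\<in>A. 1 - 1)"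
    by (subst prod_diff_conv_sum[OF assms]) simp
  also have "\<dots> = of_bool (A = {})"
    using assms by (simp add: power_0_left)
  finally show ?thesis .
qed

lemma sum_Pow_minus_one_power_avoiding:
  assumes "finite A"
  shows "(\<Sum>K\<in>Pow A. (-1) ^ card K * of_bool (X \<inter> (J \<union> K) = {}) :: 'a::comm_ring_1)
       = of_bool (X \<inter> J = {} \<and> A \<subseteq> X)"
proof -
  have Pow_Diff_eq_filter: "Pow (A - X) = {K \<in> Pow A. K \<subseteq> A - X}"
    by blast
  have "(\<Sum>K\<in>Pow A. (-1) ^ card K * of_bool (X \<inter> (J \<union> K) = {}) :: 'a)
      = of_bool (X \<inter> J = {}) * (\<Sum>K\<in>Pow A. if K \<subseteq> A - X then (-1) ^ card K else 0)"
    unfolding sum_distrib_left by (rule sum.cong) (auto simp: of_bool_def)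
  also have "\<dots> = of_bool (X \<inter> J = {}) * (\<Sum>K\<in>Pow (A - X). (-1) ^ card K)"
    unfolding Pow_Diff_eq_filter using assms by (subst sum.inter_filter) auto
  also have "\<dots> = of_bool (X \<inter> J = {} \<and> A \<subseteq> X)"
    using assms by (simp add: sum_Pow_minus_one_power)
  finally show ?thesis .
qed

lemma plusS_Un: "plusS n (A \<union> B) = plusS n A \<union> plusS n B"
  unfolding plusS_def by (simp add: image_Un Un_ac)

lemma plusS_mono: "A \<subseteq> B \<Longrightarrow> plusS n A \<subseteq> plusS n B"
  unfolding plusS_def by (intro Un_mono image_mono)

lemma plusS_disjoint:
  assumes "A \<inter> B = {}" "A \<subseteq> {1..n}" "B \<subseteq> {1..n}"
  shows "plusS n A \<inter> plusS n B = {}"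
proof -
  have "u + n \<notin> X" if "u \<in> Y" "X \<subseteq> {1..n}" "Y \<subseteq> {1..n}" for u and X Y :: "nat set"
  proof
    assume "u + n \<in> X"
    then have "u + n \<le> n" using that(2) by auto
    moreover have "1 \<le> u" using that(1,3) by auto
    ultimately show False by simp
  qed
  with assms show ?thesis
    unfolding plusS_def by auto
qed

definition occupied :: "nat \<Rightarrow> nat set set \<times> nat set set \<times> nat set \<Rightarrow> nat set" where
  "occupied n t = (case t of (E1, E2, L) \<Rightarrow> \<Union>E1 \<union> (\<lambda>s. s + n) ` \<Union>E2 \<union> plusS n L)"

lemma dsj_iff_occupied: "dsj n I t \<longleftrightarrow> occupied n t \<inter> I = {}"
  by (cases t) (auto simp: dsj_def occupied_def Int_Un_distrib2 Union_disjoint image_Union)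

lemma occupied_subset_plusS: "occupied n (E1, E2, L) \<subseteq> plusS n (\<Union>E1 \<union> \<Union>E2 \<union> L)"
  unfolding occupied_def plusS_def by auto

lemma occupied_tpl_disjoint_plusS:
  assumes "separated E U W" "\<forall>e\<in>E. e \<subseteq> {1..n}" "U \<subseteq> {1..n}" "W \<subseteq> {1..n}" "t \<in> tpl E U"
  shows "occupied n t \<inter> plusS n W = {}"
proof -
  let ?X = "\<Union>(delta E U) \<union> U"
  obtain E1 E2 L where t: "t = (E1, E2, L)"
    by (cases t) auto
  have "\<Union>E1 \<union> \<Union>E2 \<union> L \<subseteq> ?X"
    using assms(5) unfolding t tpl_def by auto
  then have "occupied n t \<subseteq> plusS n ?X"
    unfolding t using occupied_subset_plusS plusS_mono by blast
  moreover have "?X \<inter> W = {}"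
    using assms(1) unfolding separated_def delta_def by blast
  moreover have "?X \<subseteq> {1..n}"
    using assms(2,3) unfolding delta_def by blast
  ultimately show ?thesis
    using plusS_disjoint[of ?X W n] assms(4) by blast
qed

fun union3 :: "'a set \<times> 'b set \<times> 'c set \<Rightarrow> 'a set \<times> 'b set \<times> 'c set \<Rightarrow> 'a set \<times> 'b set \<times> 'c set" where
  "union3 (A1, A2, A3) (B1, B2, B3) = (A1 \<union> B1, A2 \<union> B2, A3 \<union> B3)"

lemma occupied_union3: "occupied n (union3 t s) = occupied n t \<union> occupied n s"
  by (cases t; cases s) (auto simp: occupied_def plusS_Un)

lemma mon_union3:
  assumes "finite A1" "finite A2" "finite A3" "finite B1" "finite B2" "finite B3"
    and "(A1 \<union> A2) \<inter> (B1 \<union> B2) = {}" "A3 \<inter> B3 = {}"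
  shows "mon w x y z om (union3 (A1, A2, A3) (B1, B2, B3))
       = mon w x y z om (A1, A2, A3) * mon w x y z om (B1, B2, B3)"
proof -
  have "card (A1 \<union> B1) = card A1 + card B1" "card (A2 \<union> B2) = card A2 + card B2"
    "card (A3 \<union> B3) = card A3 + card B3"
    using assms by (auto intro!: card_Un_disjoint)
  moreover have "(\<Sum>e\<in>A1 \<union> B1 \<union> (A2 \<union> B2). w e) = (\<Sum>e\<in>A1 \<union> A2. w e) + (\<Sum>e\<in>B1 \<union> B2. w e)"
    using assms by (simp add: Un_ac flip: sum.union_disjoint)
  ultimately show ?thesis
    unfolding mon_def by (simp add: power_add algebra_simps)
qed

lemma mon_union3_tpl:
  assumes "separated E U W" "finite E" "finite U" "finite W" "t \<in> tpl E U" "s \<in> tpl E W"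
  shows "mon w x y z om (union3 t s) = mon w x y z om t * mon w x y z om s"
proof -
  obtain A1 A2 A3 B1 B2 B3 where ts: "t = (A1, A2, A3)" "s = (B1, B2, B3)"
    by (cases t; cases s) auto
  have "finite (delta E V)" for V
    using assms(2) unfolding delta_def by simp
  then show ?thesis
    using assms separated_delta_disjoint[OF assms(1)] unfolding ts tpl_def separated_def
    by (intro mon_union3) (auto intro: finite_subset)
qed

lemma bij_betw_union3_tpl:
  assumes "separated E U W"
  shows "bij_betw (case_prod union3) (tpl E U \<times> tpl E W) (tpl E (U \<union> W))"
proof -
  define split where "split t = (case t of (E1, E2, L) \<Rightarrow>
    ((E1 \<inter> delta E U, E2 \<inter> delta E U, L \<inter> U), (E1 \<inter> delta E W, E2 \<inter> delta E W, L \<inter> W)))" for t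
  have disj: "delta E U \<inter> delta E W = {}" "U \<inter> W = {}"
    using assms separated_delta_disjoint unfolding separated_def by auto
  have delta_Un: "delta E (U \<union> W) = delta E U \<union> delta E W"
    unfolding delta_def by blast
  show ?thesis
  proof (rule bij_betw_byWitness[where f'=split])
    show "\<forall>p\<in>tpl E U \<times> tpl E W. split (case_prod union3 p) = p"
      using disj unfolding tpl_def split_def by auto
    show "\<forall>t\<in>tpl E (U \<union> W). case_prod union3 (split t) = t"
      unfolding tpl_def split_def delta_Un by auto
    show "case_prod union3 ` (tpl E U \<times> tpl E W) \<subseteq> tpl E (U \<union> W)"
      using disj unfolding tpl_def delta_Un by (auto; blast)
    show "split ` tpl E (U \<union> W) \<subseteq> tpl E U \<times> tpl E W"
      unfolding tpl_def split_def delta_Un by auto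
  qed
qed

definition covers :: "nat \<Rightarrow> nat set \<Rightarrow> nat set \<Rightarrow> nat set set \<times> nat set set \<times> nat set \<Rightarrow> bool" where
  "covers n U J t \<longleftrightarrow> occupied n t \<inter> J = {} \<and> plusS n U \<subseteq> occupied n t"

lemma covers_union3:
  assumes "occupied n t \<inter> plusS n W = {}" "occupied n s \<inter> plusS n U = {}"
  shows "covers n (U \<union> W) J (union3 t s) \<longleftrightarrow> covers n U J t \<and> covers n W J s"
  using assms unfolding covers_def occupied_union3 plusS_Un by blast

(* Pv and Qv are the instances U = tree[v] and U = tree(v). *)
definition vertex_poly :: "nat \<Rightarrow> nat set set \<Rightarrow> (nat set \<Rightarrow> nat) \<Rightarrow> 'a::comm_ring_1 \<Rightarrow> 'a \<Rightarrow> 'a \<Rightarrow> 'a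
                            \<Rightarrow> nat set \<Rightarrow> nat set \<Rightarrow> 'a" where
  "vertex_poly n E w x y z om J U =
     (\<Sum>t\<in>tpl E U. mon w x y z om t *
        (\<Sum>K\<in>Pow (plusS n U). (-1) ^ card K * of_bool (dsj n (J \<union> K) t)))"

lemma vertex_poly_eq_sum_covers:
  assumes "finite U"
  shows "vertex_poly n E w x y z om J U = (\<Sum>t\<in>tpl E U. mon w x y z om t * of_bool (covers n U J t))"
proof -
  have "finite (plusS n U)"
    using assms unfolding plusS_def by simp
  then show ?thesis
    unfolding vertex_poly_def covers_def dsj_iff_occupied
    by (simp only: sum_Pow_minus_one_power_avoiding)
qed

lemma vertex_poly_empty: "vertex_poly n E w x y z om J {} = 1"
proof -
  have "tpl E {} = {({}, {}, {})}"
    unfolding tpl_def delta_def by auto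
  moreover have "covers n {} J ({}, {}, {})"
    unfolding covers_def occupied_def plusS_def by simp
  ultimately show ?thesis
    by (simp add: vertex_poly_eq_sum_covers mon_def)
qed

lemma vertex_poly_Un:
  assumes sep: "separated E U W" and "finite E" and edges: "\<forall>e\<in>E. e \<subseteq> {1..n}"
    and "U \<subseteq> {1..n}" "W \<subseteq> {1..n}"
  shows "vertex_poly n E w x y z om J (U \<union> W)
       = vertex_poly n E w x y z om J U * vertex_poly n E w x y z om J W"
proof -
  have fin: "finite U" "finite W"
    using assms(4,5) finite_subset by blast+
  have sep': "separated E W U"
    using sep unfolding separated_def by blast
  let ?f = "\<lambda>V t. mon w x y z om t * of_bool (covers n V J t)"
  have "vertex_poly n E w x y z om J U * vertex_poly n E w x y z om J W
      = (\<Sum>(t, s)\<in>tpl E U \<times> tpl E W. ?f U t * ?f W s)"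
    by (simp add: vertex_poly_eq_sum_covers fin sum_product sum.cartesian_product)
  also have "\<dots> = (\<Sum>(t, s)\<in>tpl E U \<times> tpl E W. ?f (U \<union> W) (union3 t s))"
  proof (rule sum.cong[OF refl], clarify)
    fix t s assume t: "t \<in> tpl E U" and s: "s \<in> tpl E W"
    have "covers n (U \<union> W) J (union3 t s) \<longleftrightarrow> covers n U J t \<and> covers n W J s"
      using covers_union3 occupied_tpl_disjoint_plusS[OF sep edges assms(4,5) t]
        occupied_tpl_disjoint_plusS[OF sep' edges assms(5,4) s] by blast
    then show "?f U t * ?f W s = ?f (U \<union> W) (union3 t s)"
      by (simp add: mon_union3_tpl[OF sep \<open>finite E\<close> fin t s] algebra_simps)
  qed
  also have "\<dots> = (\<Sum>t\<in>tpl E (U \<union> W). ?f (U \<union> W) t)"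
    using sum.reindex_bij_betw[OF bij_betw_union3_tpl[OF sep], of "?f (U \<union> W)"]
    by (simp add: case_prod_unfold)
  also have "\<dots> = vertex_poly n E w x y z om J (U \<union> W)"
    using fin by (simp add: vertex_poly_eq_sum_covers)
  finally show ?thesis ..
qed

lemma vertex_poly_UN:
  assumes "finite C" "finite E" "\<forall>e\<in>E. e \<subseteq> {1..n}" "\<forall>c\<in>C. T c \<subseteq> {1..n}"
    and "pairwise (\<lambda>c d. separated E (T c) (T d)) C"
  shows "vertex_poly n E w x y z om J (\<Union>c\<in>C. T c) = (\<Prod>c\<in>C. vertex_poly n E w x y z om J (T c))"
  using assms(1,4,5)
proof (induction C rule: finite_induct)
  case empty
  show ?case
    by (simp add: vertex_poly_empty)
next
  case (insert c C)
  have "separated E (T c) (\<Union>d\<in>C. T d)"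
    using insert.prems(2) insert.hyps(2) by (intro separated_UN) (auto simp: pairwise_def)
  then have "vertex_poly n E w x y z om J (T c \<union> (\<Union>d\<in>C. T d))
      = vertex_poly n E w x y z om J (T c) * vertex_poly n E w x y z om J (\<Union>d\<in>C. T d)"
    using vertex_poly_Un assms(2,3) insert.prems(1) by (metis UN_least insert_iff)
  then show ?case
    using insert by (simp add: pairwise_insert)
qed

theorem lemma5:
  fixes n N :: nat and E :: "nat set set" and w :: "nat set \<Rightarrow> nat"
    and par :: "nat \<Rightarrow> nat" and r v :: nat and J' :: "nat set"
    and x y z om :: "'a::comm_ring_1"
  assumes "simple_graph n E"
    and "graph_connected n E"
    and "\<forall>e\<in>E. w e \<in> {1..N}"
    and "elimination_tree n E par r"
    and "v \<in> {1..n}"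
    and "children {1..n} par v \<noteq> {}"
    and "J' \<subseteq> plusS n (tailC par v)"
  shows "Qv n E w par x y z om v J' =
         (\<Prod>u\<in>children {1..n} par v. Pv n E w par x y z om u J')"
proof -
  have rt: "rooted_tree {1..n} par r"
    using assms(4) unfolding elimination_tree_def by blast
  have edges: "\<forall>e\<in>E. e \<subseteq> {1..n}"
    using assms(1) unfolding simple_graph_def by blast
  then have "E \<subseteq> Pow {1..n}"
    by blast
  then have "finite E"
    by (rule finite_subset) simp
  have "Qv n E w par x y z om v J' = vertex_poly n E w x y z om J' (treeC {1..n} par v - {v})"
    unfolding Qv_def vertex_poly_def ..
  also have "\<dots> = vertex_poly n E w x y z om J' (\<Union>c\<in>children {1..n} par v. treeC {1..n} par c)"
    by (simp only: treeC_minus_root_eq_UN_children[OF rt])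
  also have "\<dots> = (\<Prod>c\<in>children {1..n} par v. vertex_poly n E w x y z om J' (treeC {1..n} par c))"
    using elimination_tree_children_separated[OF assms(4,1)] \<open>finite E\<close> edges
    by (intro vertex_poly_UN) (auto simp: pairwise_def children_def treeC_def)
  also have "\<dots> = (\<Prod>u\<in>children {1..n} par v. Pv n E w par x y z om u J')"
    unfolding Pv_def vertex_poly_def ..
  finally show ?thesis .
qed

end
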